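(* Let $G$ be an antimatroid on a ground set $S$ with $|S|=n$, with Tutte polynomial $T(G;x,y)=\sum_{i,j}b_{i,j}x^iy^j$. For $i\ge0$ let $a_{i,1}$ be the number of convex sets with $i$ elements and exactly one interior point, and for $p\in S$ let $\mathcal{C}_p$ be the collection of convex sets $C$ with $\mathrm{int}(C)=\{p\}$. Then $$b_{0,1}=\sum_{i=0}^{n}(-1)^ia_{i,1}=\sum_{p\in\mathrm{int}(S)}\ \sum_{C\in\mathcal{C}_p}(-1)^{|C|}.$$
   Context: An antimatroid on a finite set $S$ is a family $\mathcal{F}\subseteq 2^S$ of feasible sets with $\emptyset\in\mathcal{F}$, $S\in\mathcal{F}$, closed under union, and accessible: every nonempty $F\in\mathcal{F}$ contains some $x$ with $F\setminus\{x\}\in\mathcal{F}$. Its rank function is $r(A)=\max\{|F|:F\in\mathcal{F},F\subseteq A\}$, and its Tutte polynomial is $T(G;x,y)=\sum_{A\subseteq S}(x-1)^{r(S)-r(A)}(y-1)^{|A|-r(A)}$. A set $C$ is convex if $S\setminus C\in\mathcal{F}$; the convex closure $\overline{A}$ of $A$ is the smallest convex set containing $A$. For convex $C$, $p\in C$ is extreme if $p\notin\overline{C\setminus\{p\}}$; $\mathrm{int}(C)$ is the set of non-extreme points of $C$ (in particular $\mathrm{int}(S)$ is the set of non-extreme points of $S$). *)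

theory Defs
  imports "HOL-Computational_Algebra.Polynomial"
begin

definition antimatroid :: "'a set \<Rightarrow> 'a set set \<Rightarrow> bool" where
  "antimatroid S F \<longleftrightarrow> finite S \<and> F \<subseteq> Pow S \<and> {} \<in> F \<and> S \<in> F \<and>
     (\<forall>X\<in>F. \<forall>Y\<in>F. X \<union> Y \<in> F) \<and>
     (\<forall>X\<in>F. X \<noteq> {} \<longrightarrow> (\<exists>x\<in>X. X - {x} \<in> F))"

definition am_rank :: "'a set set \<Rightarrow> 'a set \<Rightarrow> nat" where
  "am_rank F A = Max {card X | X. X \<in> F \<and> X \<subseteq> A}"

text \<open>Tutte polynomial as a bivariate integer polynomial: outer variable y, inner
  (coefficient) variable x. So the coefficient of x^i y^j is coeff (coeff T j) i.\<close>
definition tutte_poly :: "'a set \<Rightarrow> 'a set set \<Rightarrow> int poly poly" where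
  "tutte_poly S F = (\<Sum>A\<in>Pow S.
      [:[:-1, 1:]:] ^ (am_rank F S - am_rank F A) * [:-1, 1:] ^ (card A - am_rank F A))"

definition tutte_coeff :: "'a set \<Rightarrow> 'a set set \<Rightarrow> nat \<Rightarrow> nat \<Rightarrow> int" where
  "tutte_coeff S F i j = coeff (coeff (tutte_poly S F) j) i"

definition am_convex :: "'a set \<Rightarrow> 'a set set \<Rightarrow> 'a set \<Rightarrow> bool" where
  "am_convex S F C \<longleftrightarrow> C \<subseteq> S \<and> S - C \<in> F"

definition am_closure :: "'a set \<Rightarrow> 'a set set \<Rightarrow> 'a set \<Rightarrow> 'a set" where
  "am_closure S F A = \<Inter> {C. am_convex S F C \<and> A \<subseteq> C}"

definition am_extreme :: "'a set \<Rightarrow> 'a set set \<Rightarrow> 'a set \<Rightarrow> 'a \<Rightarrow> bool" where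
  "am_extreme S F C p \<longleftrightarrow> p \<in> C \<and> p \<notin> am_closure S F (C - {p})"

definition am_int :: "'a set \<Rightarrow> 'a set set \<Rightarrow> 'a set \<Rightarrow> 'a set" where
  "am_int S F C = {p \<in> C. \<not> am_extreme S F C p}"

definition a_i1 :: "'a set \<Rightarrow> 'a set set \<Rightarrow> nat \<Rightarrow> nat" where
  "a_i1 S F i = card {C. am_convex S F C \<and> card C = i \<and> card (am_int S F C) = 1}"

end

theory Submission
  imports Defs
begin

text \<open>Every subset A of S splits uniquely as (S - C) \<union> B with C convex and B \<subseteq> int(C):
  S - C is the kernel of A (its largest feasible subset), and a point of A outside the kernel
  cannot be extreme in C since adding it to the kernel would give a larger feasible subset.
  On that piece the rank is |S - C|, so the Tutte polynomial becomes the sum over convex C of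
  (x-1)^|C| y^|int(C)|, whose coefficient of y is the alternating count of convex sets
  with exactly one interior point. Grouping these by their interior point gives the second
  identity, because the interior of a convex set is contained in the interior of S.\<close>

definition am_kernel :: "'a set set \<Rightarrow> 'a set \<Rightarrow> 'a set" where
  "am_kernel F A = \<Union>{X\<in>F. X \<subseteq> A}"

lemma antimatroidD:
  assumes "antimatroid S F"
  shows "finite S" "F \<subseteq> Pow S" "{} \<in> F" "S \<in> F"
    "\<And>X Y. X \<in> F \<Longrightarrow> Y \<in> F \<Longrightarrow> X \<union> Y \<in> F"
    "\<And>X. X \<in> F \<Longrightarrow> X \<noteq> {} \<Longrightarrow> \<exists>x\<in>X. X - {x} \<in> F"
  using assms unfolding antimatroid_def by blast+

lemma antimatroid_finite_feasible: "antimatroid S F \<Longrightarrow> finite F"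
  using antimatroidD(1,2) finite_Pow_iff finite_subset by metis

lemma antimatroid_Union_feasible:
  assumes a: "antimatroid S F" and "G \<subseteq> F"
  shows "\<Union>G \<in> F"
proof -
  have "finite G" using assms antimatroid_finite_feasible finite_subset by blast
  from this \<open>G \<subseteq> F\<close> show ?thesis
    by (induction G rule: finite_induct) (auto intro: antimatroidD(3,5)[OF a])
qed

lemma am_kernel_feasible: "antimatroid S F \<Longrightarrow> am_kernel F A \<in> F"
  unfolding am_kernel_def by (rule antimatroid_Union_feasible) auto

lemma am_kernel_subset: "am_kernel F A \<subseteq> A"
  unfolding am_kernel_def by auto

lemma subset_am_kernel: "X \<in> F \<Longrightarrow> X \<subseteq> A \<Longrightarrow> X \<subseteq> am_kernel F A"
  unfolding am_kernel_def by auto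

lemma am_rank_eq_card_kernel:
  assumes a: "antimatroid S F"
  shows "am_rank F A = card (am_kernel F A)"
  unfolding am_rank_def
proof (rule Max_eqI)
  have "{card X | X. X \<in> F \<and> X \<subseteq> A} = card ` {X \<in> F. X \<subseteq> A}" by blast
  then show "finite {card X | X. X \<in> F \<and> X \<subseteq> A}"
    using antimatroid_finite_feasible[OF a] by simp
  have "am_kernel F A \<subseteq> S" using am_kernel_feasible[OF a] antimatroidD(2)[OF a] by blast
  then have "finite (am_kernel F A)" using antimatroidD(1)[OF a] by (rule finite_subset)
  then show "y \<le> card (am_kernel F A)" if y: "y \<in> {card X | X. X \<in> F \<and> X \<subseteq> A}" for y
  proof -
    obtain X where "y = card X" "X \<in> F" "X \<subseteq> A" using y by blast
    with card_mono[OF \<open>finite (am_kernel F A)\<close> subset_am_kernel] show ?thesis by simp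
  qed
  show "card (am_kernel F A) \<in> {card X | X. X \<in> F \<and> X \<subseteq> A}"
    using am_kernel_feasible[OF a] am_kernel_subset[of F A] by blast
qed

lemma antimatroid_augment:
  assumes a: "antimatroid S F" and K: "K \<in> F" and Y: "Y \<in> F" "\<not> Y \<subseteq> K"
  shows "\<exists>x\<in>Y - K. insert x K \<in> F"
  using Y
proof (induction "card Y" arbitrary: Y rule: less_induct)
  case less
  have "finite Y" using less.prems antimatroidD(1,2)[OF a] finite_subset by blast
  obtain y where y: "y \<in> Y" "Y - {y} \<in> F"
    using less.prems antimatroidD(6)[OF a] by blast
  show ?case
  proof (cases "Y - {y} \<subseteq> K")
    case True
    then have "K \<union> Y = insert y K" "y \<notin> K" using y less.prems(2) by auto
    with antimatroidD(5)[OF a K less.prems(1)] y show ?thesis by auto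
  next
    case False
    with less.hyps[OF card_Diff1_less[OF \<open>finite Y\<close> y(1)] y(2)] show ?thesis by auto
  qed
qed

lemma am_convex_Int:
  assumes "antimatroid S F" "am_convex S F C" "am_convex S F D"
  shows "am_convex S F (C \<inter> D)"
proof -
  have "S - (C \<inter> D) = (S - C) \<union> (S - D)" by auto
  then show ?thesis using assms antimatroidD(5)[OF assms(1)] unfolding am_convex_def by auto
qed

lemma am_convex_space: "antimatroid S F \<Longrightarrow> am_convex S F S"
  unfolding am_convex_def using antimatroidD(3) by simp

lemma finite_am_convex: "antimatroid S F \<Longrightarrow> finite {C. am_convex S F C}"
  by (rule finite_subset[of _ "Pow S"]) (auto simp: am_convex_def antimatroidD(1))

lemma am_extreme_iff_convex_Diff:
  assumes a: "antimatroid S F" and C: "am_convex S F C" and x: "x \<in> C"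
  shows "am_extreme S F C x \<longleftrightarrow> am_convex S F (C - {x})"
proof
  assume "am_extreme S F C x"
  then obtain D where D: "am_convex S F D" "C - {x} \<subseteq> D" "x \<notin> D"
    unfolding am_extreme_def am_closure_def by auto
  then have "C \<inter> D = C - {x}" by auto
  with am_convex_Int[OF a C D(1)] show "am_convex S F (C - {x})" by simp
qed (use x in \<open>auto simp: am_extreme_def am_closure_def\<close>)

lemma am_extreme_iff_feasible:
  assumes a: "antimatroid S F" and C: "am_convex S F C" and x: "x \<in> C"
  shows "am_extreme S F C x \<longleftrightarrow> insert x (S - C) \<in> F"
proof -
  have "S - (C - {x}) = insert x (S - C)" using C x unfolding am_convex_def by auto
  then show ?thesis using am_extreme_iff_convex_Diff[OF a C x] C unfolding am_convex_def by auto
qed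

lemma am_int_subset: "am_int S F C \<subseteq> C"
  unfolding am_int_def by auto

lemma am_int_mono:
  assumes a: "antimatroid S F" and C: "am_convex S F C" and D: "am_convex S F D" and "C \<subseteq> D"
  shows "am_int S F C \<subseteq> am_int S F D"
proof
  fix p assume p: "p \<in> am_int S F C"
  then have "p \<in> C" "insert p (S - C) \<notin> F"
    using am_extreme_iff_feasible[OF a C] unfolding am_int_def by auto
  moreover have "insert p (S - C) = insert p (S - D) \<union> (S - C)" using \<open>C \<subseteq> D\<close> by auto
  ultimately have "insert p (S - D) \<notin> F"
    using antimatroidD(5)[OF a] C unfolding am_convex_def by metis
  then show "p \<in> am_int S F D"
    using \<open>p \<in> C\<close> \<open>C \<subseteq> D\<close> am_extreme_iff_feasible[OF a D] unfolding am_int_def by auto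
qed

lemma am_kernel_complement_Un_interior:
  assumes a: "antimatroid S F" and C: "am_convex S F C" and B: "B \<subseteq> am_int S F C"
  shows "am_kernel F ((S - C) \<union> B) = S - C"
proof (rule ccontr)
  let ?K = "am_kernel F ((S - C) \<union> B)"
  have K: "S - C \<in> F" using C unfolding am_convex_def by auto
  assume "?K \<noteq> S - C"
  moreover have "S - C \<subseteq> ?K" using K by (intro subset_am_kernel) auto
  ultimately have "\<not> ?K \<subseteq> S - C" by blast
  then obtain x where x: "x \<in> ?K - (S - C)" "insert x (S - C) \<in> F"
    using antimatroid_augment[OF a K am_kernel_feasible[OF a]] by blast
  then have "x \<in> am_int S F C" using B am_kernel_subset[of F "(S - C) \<union> B"] by blast
  with x(2) show False using am_extreme_iff_feasible[OF a C] unfolding am_int_def by auto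
qed

lemma am_kernel_complement_convex:
  assumes a: "antimatroid S F" and A: "A \<subseteq> S"
  shows "am_convex S F (S - am_kernel F A)"
  using am_kernel_feasible[OF a] am_kernel_subset[of F A] A
  unfolding am_convex_def by (simp add: double_diff)

lemma outside_am_kernel_interior:
  assumes a: "antimatroid S F" and A: "A \<subseteq> S"
  shows "A - am_kernel F A \<subseteq> am_int S F (S - am_kernel F A)"
proof
  fix x assume x: "x \<in> A - am_kernel F A"
  have "insert x (am_kernel F A) \<notin> F"
    using x subset_am_kernel[of "insert x (am_kernel F A)" F A] am_kernel_subset[of F A] by auto
  moreover have "S - (S - am_kernel F A) = am_kernel F A"
    using am_kernel_subset[of F A] A by auto
  ultimately show "x \<in> am_int S F (S - am_kernel F A)"
    using x A am_extreme_iff_feasible[OF a am_kernel_complement_convex[OF a A]]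
    unfolding am_int_def by auto
qed

lemma sum_Pow_am_kernel_decomposition:
  assumes a: "antimatroid S F"
  shows "(\<Sum>A\<in>Pow S. h A) =
    (\<Sum>(C, B)\<in>Sigma {C. am_convex S F C} (\<lambda>C. Pow (am_int S F C)). h ((S - C) \<union> B))"
proof (rule sum.reindex_bij_witness[where i = "\<lambda>(C, B). (S - C) \<union> B"
      and j = "\<lambda>A. (S - am_kernel F A, A - am_kernel F A)"])
  fix A assume "A \<in> Pow S"
  then have A: "A \<subseteq> S" by simp
  have "S - (S - am_kernel F A) \<union> (A - am_kernel F A) = A"
    using A am_kernel_subset[of F A] by auto
  then show "(case (S - am_kernel F A, A - am_kernel F A) of (C, B) \<Rightarrow> S - C \<union> B) = A"
    and "(case (S - am_kernel F A, A - am_kernel F A) of (C, B) \<Rightarrow> h (S - C \<union> B)) = h A"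
    by simp_all
  show "(S - am_kernel F A, A - am_kernel F A) \<in> Sigma {C. am_convex S F C} (\<lambda>C. Pow (am_int S F C))"
    using am_kernel_complement_convex[OF a A] outside_am_kernel_interior[OF a A] by auto
next
  fix CB assume "CB \<in> Sigma {C. am_convex S F C} (\<lambda>C. Pow (am_int S F C))"
  then obtain C B where CB: "CB = (C, B)" "am_convex S F C" "B \<subseteq> am_int S F C" by auto
  then have "B \<subseteq> C" "C \<subseteq> S" using am_int_subset[of S F C] unfolding am_convex_def by blast+
  then show "(case CB of (C, B) \<Rightarrow> S - C \<union> B) \<in> Pow S"
    and "(\<lambda>A. (S - am_kernel F A, A - am_kernel F A)) (case CB of (C, B) \<Rightarrow> S - C \<union> B) = CB"
    using CB am_kernel_complement_Un_interior[OF a CB(2,3)] by auto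
qed

lemma sum_Pow_power_card:
  fixes q :: "'b::comm_ring_1"
  assumes "finite I"
  shows "(\<Sum>B\<in>Pow I. q ^ card B) = (q + 1) ^ card I"
  using prod_add[OF assms, of "\<lambda>_. q" "\<lambda>_. 1"] by simp

lemma tutte_poly_convex_expansion:
  assumes a: "antimatroid S F"
  shows "tutte_poly S F = (\<Sum>C\<in>{C. am_convex S F C}.
           [:[:-1, 1:]:] ^ card C * [:0, 1:] ^ card (am_int S F C))"
proof -
  let ?p = "[:[:-1, 1:]:] :: int poly poly" and ?q = "[:-1, 1:] :: int poly poly"
  let ?T = "\<lambda>A. ?p ^ (am_rank F S - am_rank F A) * ?q ^ (card A - am_rank F A)"
  have rank_S: "am_rank F S = card S"
    using am_rank_eq_card_kernel[OF a] am_kernel_subset subset_am_kernel[OF antimatroidD(4)[OF a]]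
    by (metis order_refl subset_antisym)
  have summand: "?T ((S - C) \<union> B) = ?p ^ card C * ?q ^ card B"
    if C: "am_convex S F C" and B: "B \<subseteq> am_int S F C" for C B
  proof -
    have BC: "B \<subseteq> C" "C \<subseteq> S" using B C am_int_subset[of S F C] unfolding am_convex_def by blast+
    have fin: "finite C" "finite B" "finite S"
      using BC antimatroidD(1)[OF a] finite_subset by metis+
    have rank: "am_rank F ((S - C) \<union> B) = card (S - C)"
      using am_rank_eq_card_kernel[OF a] am_kernel_complement_Un_interior[OF a C B] by simp
    have "card S - card (S - C) = card C"
      using BC fin by (simp add: card_Diff_subset card_mono)
    moreover have "card ((S - C) \<union> B) - card (S - C) = card B"
      using BC fin by (subst card_Un_disjoint) auto
    ultimately show ?thesis by (simp add: rank_S rank)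
  qed
  have fin: "finite (am_int S F C)" if "am_convex S F C" for C
    using that am_int_subset[of S F C] antimatroidD(1)[OF a] finite_subset unfolding am_convex_def by metis
  have "tutte_poly S F = (\<Sum>(C, B)\<in>Sigma {C. am_convex S F C} (\<lambda>C. Pow (am_int S F C)).
      ?T ((S - C) \<union> B))"
    unfolding tutte_poly_def by (rule sum_Pow_am_kernel_decomposition[OF a])
  also have "\<dots> = (\<Sum>C\<in>{C. am_convex S F C}. \<Sum>B\<in>Pow (am_int S F C). ?p ^ card C * ?q ^ card B)"
    by (subst sum.Sigma) (auto simp: finite_am_convex[OF a] fin summand intro!: sum.cong)
  also have "\<dots> = (\<Sum>C\<in>{C. am_convex S F C}. ?p ^ card C * (?q + 1) ^ card (am_int S F C))"
    by (simp add: sum_distrib_left[symmetric] sum_Pow_power_card fin)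
  also have "?q + 1 = [:0, 1:]" by (simp add: one_pCons)
  finally show ?thesis .
qed

lemma tutte_coeff_0_1_convex:
  assumes a: "antimatroid S F"
  shows "tutte_coeff S F 0 1 =
    (\<Sum>C\<in>{C. am_convex S F C \<and> card (am_int S F C) = 1}. (-1) ^ card C)"
proof -
  have pow_const: "[:c:] ^ n * Q = smult (c ^ n) Q" for c :: "int poly" and n Q
    by (induction n) (auto simp: algebra_simps)
  have coeff_X: "coeff ([:0, 1:] ^ k :: int poly poly) 1 = (if k = 1 then 1 else 0)" for k
    by (simp add: monom_altdef[of 1 k, simplified, symmetric])
  have coeff_x_minus_1: "coeff ([:-1, 1:] ^ k :: int poly) 0 = (-1) ^ k" for k
    by (simp flip: poly_0_coeff_0 add: poly_power)
  have "tutte_coeff S F 0 1 =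
      (\<Sum>C\<in>{C. am_convex S F C}. if card (am_int S F C) = 1 then (-1) ^ card C else 0)"
    unfolding tutte_coeff_def tutte_poly_convex_expansion[OF a] coeff_sum pow_const coeff_smult coeff_X
    by (rule sum.cong) (simp_all add: coeff_x_minus_1)
  also have "\<dots> = (\<Sum>C\<in>{C \<in> {C. am_convex S F C}. card (am_int S F C) = 1}. (-1) ^ card C)"
    by (rule sum.inter_filter[symmetric, OF finite_am_convex[OF a]])
  finally show ?thesis by simp
qed

lemma sum_one_interior_by_card:
  assumes a: "antimatroid S F"
  shows "(\<Sum>C\<in>{C. am_convex S F C \<and> card (am_int S F C) = 1}. (-1) ^ card C) =
    (\<Sum>i=0..card S. (-1) ^ i * int (a_i1 S F i))"
proof -
  let ?D = "{C. am_convex S F C \<and> card (am_int S F C) = 1}"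
  have "finite ?D" using finite_am_convex[OF a] by (rule rev_finite_subset) auto
  moreover have "card ` ?D \<subseteq> {0..card S}"
    using antimatroidD(1)[OF a] unfolding am_convex_def by (auto intro: card_mono)
  ultimately have "(\<Sum>C\<in>?D. (-1) ^ card C) =
      (\<Sum>i=0..card S. \<Sum>C\<in>{C \<in> ?D. card C = i}. (-1) ^ card C :: int)"
    by (intro sum.group[symmetric]) simp_all
  also have "\<dots> = (\<Sum>i=0..card S. (-1) ^ i * int (a_i1 S F i))"
  proof (rule sum.cong[OF refl])
    fix i
    have "{C \<in> ?D. card C = i} = {C. am_convex S F C \<and> card C = i \<and> card (am_int S F C) = 1}"
      by auto
    then show "(\<Sum>C\<in>{C \<in> ?D. card C = i}. (-1) ^ card C :: int) = (-1) ^ i * int (a_i1 S F i)"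
      unfolding a_i1_def by simp
  qed
  finally show ?thesis .
qed

lemma sum_one_interior_by_point:
  assumes a: "antimatroid S F"
  shows "(\<Sum>C\<in>{C. am_convex S F C \<and> card (am_int S F C) = 1}. (-1) ^ card C :: int) =
    (\<Sum>p\<in>am_int S F S. \<Sum>C\<in>{C. am_convex S F C \<and> am_int S F C = {p}}. (-1) ^ card C)"
proof -
  let ?Cp = "\<lambda>p. {C. am_convex S F C \<and> am_int S F C = {p}}"
  have "{C. am_convex S F C \<and> card (am_int S F C) = 1} = (\<Union>p\<in>am_int S F S. ?Cp p)"
  proof (intro set_eqI iffI)
    fix C assume "C \<in> {C. am_convex S F C \<and> card (am_int S F C) = 1}"
    then obtain p where "am_convex S F C" "am_int S F C = {p}" by (auto simp: card_1_singleton_iff)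
    moreover have "am_convex S F C \<Longrightarrow> C \<subseteq> S" by (simp add: am_convex_def)
    ultimately show "C \<in> (\<Union>p\<in>am_int S F S. ?Cp p)"
      using am_int_mono[OF a _ am_convex_space[OF a]] by blast
  qed auto
  moreover have "finite (am_int S F S)"
    using antimatroidD(1)[OF a] by (simp add: am_int_def)
  moreover have "finite (?Cp p)" for p
    using finite_am_convex[OF a] by (rule rev_finite_subset) auto
  ultimately show ?thesis by (simp add: sum.UNION_disjoint disjoint_iff)
qed

theorem corollary4p5:
  fixes S :: "'a set" and F :: "'a set set"
  assumes "antimatroid S F"
  shows "tutte_coeff S F 0 1 = (\<Sum>i=0..card S. (-1) ^ i * int (a_i1 S F i))
       \<and> (\<Sum>i=0..card S. (-1) ^ i * int (a_i1 S F i))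
           = (\<Sum>p\<in>am_int S F S. \<Sum>C\<in>{C. am_convex S F C \<and> am_int S F C = {p}}. (-1) ^ card C)"
  using tutte_coeff_0_1_convex[OF assms] sum_one_interior_by_card[OF assms]
    sum_one_interior_by_point[OF assms] by simp

end
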